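(* Let $M\ge2$, $n_1,\dots,n_M\ge2$, $\mathcal S=\prod_{j=1}^M\{1,\dots,n_j\}$, and $Q=\prod_{i=1}^M n_i-\sum_{i=1}^M n_i+M-1$. Define, for $I\subseteq\{1,\dots,M\}$, $$c_{\{1,\dots,M\}}=1,\qquad c_I=\frac{M-1-\sum_{i\in I}n_i}{Q}\quad (I\ne\{1,\dots,M\}),$$ and let $C$ be the $\mathcal S\times\mathcal S$ matrix with $C_{z,z'}=c_{A(z,z')}$, where $A(z,z')$ is the set of indices at which $z$ and $z'$ have equal coordinates. Let $\lambda_J$, $J\subseteq\{1,\dots,M\}$, be given by $$\lambda_J=\sum_{I\subseteq\{1,\dots,M\}}(-1)^{\#(J^C\cap I^C)}\,c_I\prod_{j\in J\cap I^C}(n_j-1).$$ Then $\lambda_J=\dfrac{\prod_{i=1}^M n_i}{Q}$ for every $J$ with $\#J<M-1$, and $\lambda_J=0$ for every $J$ with $\#J\ge M-1$. Consequently the maximum eigenvalue of $C$ is $$\lambda_{\max}=\frac{\prod_{i=1}^M n_i}{\prod_{i=1}^M n_i-\sum_{i=1}^M n_i+M-1}.$$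
   Context: $I^C=\{1,\dots,M\}\setminus I$; $\#$ denotes cardinality; empty products equal $1$. The eigenvalues of a matrix of this form (entries depending only on the agreement set of the two strata) are exactly the $\lambda_J$ with multiplicities $\prod_{j\notin J}(n_j-1)$. (In the paper, $C$ is the conjectured asymptotic correlation matrix of normalized within-stratum imbalances under Pocock–Simon minimization with equally prevalent strata.) *)

theory Defs
  imports Complex_Main "HOL-Library.FuncSet"
begin

definition strata :: "nat \<Rightarrow> (nat \<Rightarrow> nat) \<Rightarrow> (nat \<Rightarrow> nat) set" where
  "strata M n = PiE {1..M} (\<lambda>j. {1..n j})"

definition agree :: "nat \<Rightarrow> (nat \<Rightarrow> nat) \<Rightarrow> (nat \<Rightarrow> nat) \<Rightarrow> nat set" where
  "agree M z z' = {j \<in> {1..M}. z j = z' j}"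

definition Qval :: "nat \<Rightarrow> (nat \<Rightarrow> nat) \<Rightarrow> real" where
  "Qval M n = (\<Prod>i\<in>{1..M}. real (n i)) - (\<Sum>i\<in>{1..M}. real (n i)) + real M - 1"

definition cI :: "nat \<Rightarrow> (nat \<Rightarrow> nat) \<Rightarrow> nat set \<Rightarrow> real" where
  "cI M n I = (if I = {1..M} then 1
               else (real M - 1 - (\<Sum>i\<in>I. real (n i))) / Qval M n)"

definition Cmat :: "nat \<Rightarrow> (nat \<Rightarrow> nat) \<Rightarrow> (nat \<Rightarrow> nat) \<Rightarrow> (nat \<Rightarrow> nat) \<Rightarrow> real" where
  "Cmat M n z z' = cI M n (agree M z z')"

definition lam :: "nat \<Rightarrow> (nat \<Rightarrow> nat) \<Rightarrow> nat set \<Rightarrow> real" where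
  "lam M n J = (\<Sum>I\<in>Pow {1..M}.
      (-1) ^ card (({1..M} - J) \<inter> ({1..M} - I)) * cI M n I
        * (\<Prod>j\<in>J \<inter> ({1..M} - I). real (n j) - 1))"

definition is_eigenvalue :: "'a set \<Rightarrow> ('a \<Rightarrow> 'a \<Rightarrow> real) \<Rightarrow> real \<Rightarrow> bool" where
  "is_eigenvalue S A \<mu> \<longleftrightarrow> (\<exists>v :: 'a \<Rightarrow> real. (\<exists>z\<in>S. v z \<noteq> 0) \<and>
      (\<forall>z\<in>S. (\<Sum>z'\<in>S. A z z' * v z') = \<mu> * v z))"

definition is_max_eigenvalue :: "'a set \<Rightarrow> ('a \<Rightarrow> 'a \<Rightarrow> real) \<Rightarrow> real \<Rightarrow> bool" where
  "is_max_eigenvalue S A \<mu> \<longleftrightarrow> is_eigenvalue S A \<mu> \<and> (\<forall>\<nu>. is_eigenvalue S A \<nu> \<longrightarrow> \<nu> \<le> \<mu>)"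

end

theory Submission
  imports Defs "HOL-Analysis.Convex" "HOL-Combinatorics.Transposition"
begin

(* Multiplying by Q turns the entries into Q c_I = M - 1 - (sum of n_i over I) + P [I = {1..M}],
   where P is the product of the n_i; hence Q C = (M - 1) 11^T - (sum_i n_i E_i) + P Id with
   E_i z z' = [z_i = z'_i].

   In lam_J the sign and the weights n_j - 1 combine into the product over j outside I of w_j,
   where w_j = n_j - 1 on J and w_j = -1 off J.  Summing over all I produces products of
   1 + w_j = n_j [j in J], which vanish unless the index set lies inside J.  So only {1..M} and the
   sets {1..M} - {i} contribute, and when #J >= M - 1 their contributions cancel P exactly.

   The quadratic form v^T E_i v is the sum of the squares of the n_i fibre sums of v, so by
   Cauchy-Schwarz n_i v^T E_i v >= (sum v)^2, and the Rayleigh quotient of Q C is at most P.  The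
   bound is attained by v z = e(z_1) e(z_2) with e(1) = 1, e(2) = -1 and e = 0 otherwise: swapping
   the values 1 and 2 in a coordinate other than i preserves every i-fibre and negates v, so all
   fibre sums of v vanish. *)

lemma Qval_Suc:
  "Qval (Suc m) n = Qval m n + ((\<Prod>i\<in>{1..m}. real (n i)) - 1) * (real (n (Suc m)) - 1)"
  unfolding Qval_def by (simp add: prod.cl_ivl_Suc sum.cl_ivl_Suc algebra_simps)

lemma Qval_ge_1:
  assumes "m \<ge> 2" and "\<forall>j\<in>{1..m}. n j \<ge> 2"
  shows "Qval m n \<ge> 1"
  using assms
proof (induction m rule: nat_induct_at_least)
  case base
  have "Qval 2 n = (real (n 1) - 1) * (real (n 2) - 1)"
    unfolding Qval_def by (simp add: numeral_2_eq_2 prod.cl_ivl_Suc sum.cl_ivl_Suc algebra_simps)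
  moreover have "real (n 1) - 1 \<ge> 1" "real (n 2) - 1 \<ge> 1"
    using base by auto
  ultimately show ?case
    using mult_mono[of 1 "real (n 1) - 1" 1 "real (n 2) - 1"] by simp
next
  case (Suc m)
  have "(\<Prod>i\<in>{1..m}. real (n i)) \<ge> 1"
  proof (intro prod_ge_1)
    fix i assume "i \<in> {1..m}"
    then have "n i \<ge> 2" using Suc.prems by simp
    then show "real (n i) \<ge> 1" by simp
  qed
  moreover have "real (n (Suc m)) \<ge> 1"
    using bspec[OF Suc.prems, of "Suc m"] by simp
  moreover have "Qval m n \<ge> 1"
    using Suc by simp
  ultimately show ?case
    unfolding Qval_Suc by (simp add: add_increasing2)
qed

lemma finite_strata: "finite (strata M n)"
  unfolding strata_def by (intro finite_PiE) auto

lemma agree_eq_iff: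
  assumes "z \<in> strata M n" and "z' \<in> strata M n"
  shows "agree M z z' = {1..M} \<longleftrightarrow> z = z'"
proof
  assume "agree M z z' = {1..M}"
  then have "z j = z' j" if "j \<in> {1..M}" for j
    using that unfolding agree_def by blast
  then show "z = z'"
    by (rule PiE_ext[OF assms[unfolded strata_def]])
qed (auto simp: agree_def)

lemma Qval_mult_cI:
  assumes "Qval M n \<noteq> 0"
  shows "Qval M n * cI M n I = real M - 1 - (\<Sum>i\<in>I. real (n i))
           + (if I = {1..M} then \<Prod>i\<in>{1..M}. real (n i) else 0)"
proof (cases "I = {1..M}")
  case True
  then show ?thesis
    by (simp add: cI_def Qval_def)
next
  case False
  then show ?thesis
    using assms by (simp add: cI_def)
qed

lemma Qval_mult_Cmat:
  assumes "Qval M n \<noteq> 0" and "z \<in> strata M n" and "z' \<in> strata M n"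
  shows "Qval M n * Cmat M n z z' = real M - 1 - (\<Sum>i\<in>{1..M}. if z i = z' i then real (n i) else 0)
           + (if z = z' then \<Prod>i\<in>{1..M}. real (n i) else 0)"
proof -
  have "(\<Sum>i\<in>agree M z z'. real (n i)) = (\<Sum>i\<in>{1..M}. if z i = z' i then real (n i) else 0)"
    unfolding agree_def by (rule sum.inter_filter) simp
  then show ?thesis
    unfolding Cmat_def Qval_mult_cI[OF assms(1)] agree_eq_iff[OF assms(2,3)] by simp
qed

lemma sum_Pow_prod_Diff:
  fixes w :: "'a \<Rightarrow> 'b::comm_semiring_1"
  assumes "finite N"
  shows "(\<Sum>I\<in>Pow N. \<Prod>j\<in>N - I. w j) = (\<Prod>j\<in>N. 1 + w j)"
  using prod_add[OF assms, of "\<lambda>_. 1" w] by simp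

lemma sum_Pow_member_prod_Diff:
  fixes w :: "'a \<Rightarrow> 'b::comm_semiring_1"
  assumes "finite N" and "i \<in> N"
  shows "(\<Sum>I\<in>Pow N. if i \<in> I then \<Prod>j\<in>N - I. w j else 0) = (\<Prod>j\<in>N - {i}. 1 + w j)"
proof -
  have "(\<Prod>j\<in>N - I. (w(i := 0)) j) = (if i \<in> I then \<Prod>j\<in>N - I. w j else 0)" if "I \<subseteq> N" for I
    using assms by (auto intro!: prod.cong prod_zero)
  then have "(\<Sum>I\<in>Pow N. if i \<in> I then \<Prod>j\<in>N - I. w j else 0)
      = (\<Sum>I\<in>Pow N. \<Prod>j\<in>N - I. (w(i := 0)) j)"
    by (intro sum.cong) auto
  also have "\<dots> = (\<Prod>j\<in>N. 1 + (w(i := 0)) j)"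
    by (rule sum_Pow_prod_Diff[OF assms(1)])
  also have "\<dots> = (\<Prod>j\<in>N - {i}. 1 + w j)"
    using assms by (auto simp: prod.remove intro!: prod.cong)
  finally show ?thesis .
qed

lemma sum_Pow_sum_prod_Diff:
  fixes g w :: "'a \<Rightarrow> 'b::comm_semiring_1"
  assumes "finite N"
  shows "(\<Sum>I\<in>Pow N. (\<Sum>i\<in>I. g i) * (\<Prod>j\<in>N - I. w j))
       = (\<Sum>i\<in>N. g i * (\<Prod>j\<in>N - {i}. 1 + w j))"
proof -
  have "(\<Sum>i\<in>I. g i) * (\<Prod>j\<in>N - I. w j)
      = (\<Sum>i\<in>N. g i * (if i \<in> I then \<Prod>j\<in>N - I. w j else 0))" if "I \<subseteq> N" for I
  proof -
    have "(\<Sum>i\<in>I. g i) = (\<Sum>i\<in>N. if i \<in> I then g i else 0)"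
      using that assms by (simp add: sum.If_cases Int_absorb1)
    then show ?thesis
      by (auto simp: sum_distrib_right intro!: sum.cong)
  qed
  then have "(\<Sum>I\<in>Pow N. (\<Sum>i\<in>I. g i) * (\<Prod>j\<in>N - I. w j))
      = (\<Sum>i\<in>N. g i * (\<Sum>I\<in>Pow N. if i \<in> I then \<Prod>j\<in>N - I. w j else 0))"
    by (simp add: sum.swap[of _ N] sum_distrib_left)
  also have "\<dots> = (\<Sum>i\<in>N. g i * (\<Prod>j\<in>N - {i}. 1 + w j))"
    by (intro sum.cong refl) (simp add: sum_Pow_member_prod_Diff[OF assms])
  finally show ?thesis .
qed

lemma prod_Diff_if_neg_one:
  fixes x :: "'a \<Rightarrow> 'b::comm_ring_1"
  assumes "finite N"
  shows "(\<Prod>j\<in>N - I. if j \<in> J then x j else -1)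
       = (-1) ^ card ((N - J) \<inter> (N - I)) * (\<Prod>j\<in>J \<inter> (N - I). x j)"
proof -
  let ?f = "\<lambda>j. if j \<in> J then x j else -1"
  have "(N - I) \<inter> J = J \<inter> (N - I)" and "(N - I) - J = (N - J) \<inter> (N - I)"
    by auto
  then have "(\<Prod>j\<in>N - I. ?f j) = (\<Prod>j\<in>J \<inter> (N - I). ?f j) * (\<Prod>j\<in>(N - J) \<inter> (N - I). ?f j)"
    using assms prod.Int_Diff[of "N - I" ?f J] by simp
  also have "(\<Prod>j\<in>J \<inter> (N - I). ?f j) = (\<Prod>j\<in>J \<inter> (N - I). x j)"
    by (rule prod.cong) auto
  also have "(\<Prod>j\<in>(N - J) \<inter> (N - I). ?f j) = (-1) ^ card ((N - J) \<inter> (N - I))"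
    by (subst prod.cong[OF refl, of _ _ "\<lambda>_. -1"]) auto
  finally show ?thesis
    by (simp add: mult.commute)
qed

lemma Qval_mult_lam:
  assumes "Qval M n \<noteq> 0"
  defines "P \<equiv> \<Prod>i\<in>{1..M}. real (n i)"
  shows "Qval M n * lam M n J = (real M - 1) * (if {1..M} \<subseteq> J then P else 0)
           - P * real (card {i \<in> {1..M}. {1..M} - {i} \<subseteq> J}) + P"
proof -
  let ?N = "{1..M}"
  define w where "w j = (if j \<in> J then real (n j) - 1 else -1)" for j
  let ?W = "\<lambda>I. \<Prod>j\<in>?N - I. w j"
  have one_plus_w: "(\<Prod>j\<in>A. 1 + w j) = (if A \<subseteq> J then \<Prod>j\<in>A. real (n j) else 0)"
    if "finite A" for A
    using that by (auto simp: w_def prod_zero intro!: prod.cong)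
  have "lam M n J = (\<Sum>I\<in>Pow ?N. cI M n I * ?W I)"
    unfolding lam_def w_def by (simp add: prod_Diff_if_neg_one mult_ac)
  then have "Qval M n * lam M n J = (\<Sum>I\<in>Pow ?N. (Qval M n * cI M n I) * ?W I)"
    by (simp add: sum_distrib_left mult_ac)
  also have "\<dots> = (\<Sum>I\<in>Pow ?N. (real M - 1) * ?W I - (\<Sum>i\<in>I. real (n i)) * ?W I)
                 + (\<Sum>I\<in>Pow ?N. if I = ?N then P * ?W I else 0)"
    unfolding Qval_mult_cI[OF assms(1)] P_def sum.distrib[symmetric]
    by (intro sum.cong) (auto simp: algebra_simps)
  also have "\<dots> = (real M - 1) * (\<Prod>j\<in>?N. 1 + w j)
                 - (\<Sum>i\<in>?N. real (n i) * (\<Prod>j\<in>?N - {i}. 1 + w j)) + P"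
    by (simp add: sum_subtractf sum_distrib_left[symmetric] sum_Pow_prod_Diff sum_Pow_sum_prod_Diff)
  also have "(\<Sum>i\<in>?N. real (n i) * (\<Prod>j\<in>?N - {i}. 1 + w j))
           = (\<Sum>i\<in>?N. if ?N - {i} \<subseteq> J then P else 0)"
    unfolding P_def by (intro sum.cong refl) (simp add: one_plus_w prod.remove)
  also have "\<dots> = (\<Sum>i\<in>{i \<in> ?N. ?N - {i} \<subseteq> J}. P)"
    by (rule sum.inter_filter[symmetric]) simp
  finally show ?thesis
    by (simp add: one_plus_w P_def mult.commute)
qed

lemma subset_eq_or_Diff_singleton:
  assumes "finite N" and "J \<subseteq> N" and "card J \<ge> card N - 1"
  shows "J = N \<or> (\<exists>k\<in>N. J = N - {k})"
proof (cases "J = N")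
  case False
  then obtain k where k: "k \<in> N" "k \<notin> J"
    using assms(2) by blast
  have "J = N - {k}"
  proof (rule card_subset_eq)
    show "J \<subseteq> N - {k}"
      using assms(2) k(2) by blast
    then have "card J \<le> card (N - {k})"
      using assms(1) by (intro card_mono) auto
    then show "card J = card (N - {k})"
      using assms(3) k(1) by (simp add: card_Diff_singleton)
  qed (use assms(1) in simp)
  with k show ?thesis by blast
qed simp

lemma lam_eq_of_card_less:
  assumes "M \<ge> 2" and "\<forall>j\<in>{1..M}. n j \<ge> 2" and "J \<subseteq> {1..M}" and "card J < M - 1"
  shows "lam M n J = (\<Prod>i\<in>{1..M}. real (n i)) / Qval M n"
proof -
  have Q: "Qval M n \<noteq> 0"
    using Qval_ge_1[OF assms(1,2)] by simp
  have "\<not> {1..M} - {i} \<subseteq> J" if "i \<in> {1..M}" for i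
  proof
    assume "{1..M} - {i} \<subseteq> J"
    then have "card ({1..M} - {i}) \<le> card J"
      using assms(3) finite_subset by (intro card_mono) auto
    with that assms(4) show False by simp
  qed
  then have no_pred: "{i \<in> {1..M}. {1..M} - {i} \<subseteq> J} = {}"
    by blast
  have "\<not> {1..M} \<subseteq> J"
    using assms(3,4) by auto
  then show ?thesis
    using Qval_mult_lam[OF Q, of J, unfolded no_pred] Q by (simp add: field_simps)
qed

lemma lam_eq_0_of_card_ge:
  assumes "M \<ge> 2" and "\<forall>j\<in>{1..M}. n j \<ge> 2" and "J \<subseteq> {1..M}" and "card J \<ge> M - 1"
  shows "lam M n J = 0"
proof -
  have Q: "Qval M n \<noteq> 0"
    using Qval_ge_1[OF assms(1,2)] by simp
  consider "J = {1..M}" | k where "k \<in> {1..M}" "J = {1..M} - {k}"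
    using subset_eq_or_Diff_singleton[of "{1..M}" J] assms(3,4) by auto
  then show ?thesis
  proof cases
    case 1
    then have "{i \<in> {1..M}. {1..M} - {i} \<subseteq> J} = {1..M}" by auto
    with 1 show ?thesis
      using Qval_mult_lam[OF Q, of J] Q by (simp add: algebra_simps)
  next
    case 2
    then have "{i \<in> {1..M}. {1..M} - {i} \<subseteq> J} = {k}" and "\<not> {1..M} \<subseteq> J"
      by blast+
    then show ?thesis
      using Qval_mult_lam[OF Q, of J] Q by simp
  qed
qed

lemma eigenvalue_le_of_quadratic_form_le:
  fixes A :: "'a \<Rightarrow> 'a \<Rightarrow> real"
  assumes "finite S" and "is_eigenvalue S A \<mu>"
    and form_le: "\<And>v. (\<Sum>z\<in>S. v z * (\<Sum>z'\<in>S. A z z' * v z')) \<le> c * (\<Sum>z\<in>S. (v z)\<^sup>2)"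
  shows "\<mu> \<le> c"
proof -
  obtain v z0 where z0: "z0 \<in> S" "v z0 \<noteq> 0"
    and eigen: "\<And>z. z \<in> S \<Longrightarrow> (\<Sum>z'\<in>S. A z z' * v z') = \<mu> * v z"
    using assms(2) unfolding is_eigenvalue_def by blast
  have pos: "(\<Sum>z\<in>S. (v z)\<^sup>2) > 0"
    using assms(1) z0 by (intro sum_pos2[of _ z0]) auto
  have "(\<Sum>z\<in>S. v z * (\<Sum>z'\<in>S. A z z' * v z')) = (\<Sum>z\<in>S. \<mu> * (v z)\<^sup>2)"
    by (intro sum.cong refl) (simp add: eigen power2_eq_square)
  then have "\<mu> * (\<Sum>z\<in>S. (v z)\<^sup>2) = (\<Sum>z\<in>S. v z * (\<Sum>z'\<in>S. A z z' * v z'))"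
    by (simp add: sum_distrib_left)
  also have "\<dots> \<le> c * (\<Sum>z\<in>S. (v z)\<^sup>2)"
    by (rule form_le)
  finally show ?thesis
    using pos by simp
qed

lemma square_sum_le_card_mult_fibre_form:
  fixes v :: "'a \<Rightarrow> real" and f :: "'a \<Rightarrow> 'b"
  assumes "finite S" and "finite B" and "f ` S \<subseteq> B"
  shows "(\<Sum>z\<in>S. v z)\<^sup>2 \<le> card B * (\<Sum>z\<in>S. v z * (\<Sum>z'\<in>{z' \<in> S. f z' = f z}. v z'))"
proof -
  define T where "T b = (\<Sum>z\<in>{z \<in> S. f z = b}. v z)" for b
  have fibre_sum: "(\<Sum>z\<in>{z \<in> S. f z = b}. v z * T (f z)) = (T b)\<^sup>2" for b
  proof -
    have "(\<Sum>z\<in>{z \<in> S. f z = b}. v z * T (f z)) = (\<Sum>z\<in>{z \<in> S. f z = b}. v z * T b)"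
      by (rule sum.cong) simp_all
    then show ?thesis
      by (simp add: T_def power2_eq_square sum_distrib_right)
  qed
  have "(\<Sum>z\<in>S. v z * (\<Sum>z'\<in>{z' \<in> S. f z' = f z}. v z')) = (\<Sum>z\<in>S. v z * T (f z))"
    by (simp add: T_def)
  also have "\<dots> = (\<Sum>b\<in>B. \<Sum>z\<in>{z \<in> S. f z = b}. v z * T (f z))"
    by (rule sum.group[OF assms, symmetric])
  also have "\<dots> = (\<Sum>b\<in>B. (T b)\<^sup>2)"
    by (simp only: fibre_sum)
  finally have form: "(\<Sum>z\<in>S. v z * (\<Sum>z'\<in>{z' \<in> S. f z' = f z}. v z')) = (\<Sum>b\<in>B. (T b)\<^sup>2)" .
  have "(\<Sum>z\<in>S. v z) = (\<Sum>b\<in>B. T b)"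
    unfolding T_def using sum.group[OF assms, of v] by simp
  then show ?thesis
    using sum_squared_le_sum_of_squares[of T B] by (simp add: form mult.commute)
qed

lemma Qval_mult_Cmat_apply:
  assumes "Qval M n \<noteq> 0" and z: "z \<in> strata M n"
  defines "S \<equiv> strata M n" and "P \<equiv> \<Prod>i\<in>{1..M}. real (n i)"
  shows "Qval M n * (\<Sum>z'\<in>S. Cmat M n z z' * v z')
       = (real M - 1) * (\<Sum>z'\<in>S. v z')
         - (\<Sum>i\<in>{1..M}. real (n i) * (\<Sum>z'\<in>{z' \<in> S. z' i = z i}. v z'))
         + P * v z"
proof -
  let ?B = "\<lambda>z'. \<Sum>i\<in>{1..M}. if z i = z' i then real (n i) else 0"
  have fibre: "(\<Sum>z'\<in>S. (if z i = z' i then real (n i) else 0) * v z')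
      = real (n i) * (\<Sum>z'\<in>{z' \<in> S. z' i = z i}. v z')" for i
  proof -
    have "real (n i) * (\<Sum>z'\<in>{z' \<in> S. z' i = z i}. v z')
        = (\<Sum>z'\<in>S. real (n i) * (if z' i = z i then v z' else 0))"
      by (simp add: S_def finite_strata sum_distrib_left sum.inter_filter)
    also have "\<dots> = (\<Sum>z'\<in>S. (if z i = z' i then real (n i) else 0) * v z')"
      by (intro sum.cong refl) auto
    finally show ?thesis ..
  qed
  have diagonal: "(\<Sum>z'\<in>S. (if z = z' then P else 0) * v z') = P * v z"
  proof -
    have "(\<Sum>z'\<in>S. (if z = z' then P else 0) * v z') = (\<Sum>z'\<in>S. if z = z' then P * v z' else 0)"
      by (intro sum.cong refl) auto
    then show ?thesis
      using z by (simp add: S_def finite_strata)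
  qed
  have "Qval M n * (\<Sum>z'\<in>S. Cmat M n z z' * v z')
      = (\<Sum>z'\<in>S. (real M - 1) * v z' - ?B z' * v z' + (if z = z' then P else 0) * v z')"
    unfolding sum_distrib_left
  proof (intro sum.cong refl)
    fix z' assume "z' \<in> S"
    then show "Qval M n * (Cmat M n z z' * v z')
        = (real M - 1) * v z' - ?B z' * v z' + (if z = z' then P else 0) * v z'"
      using Qval_mult_Cmat[OF assms(1) z, of z'] unfolding S_def P_def
      by (simp only: mult.assoc[symmetric] left_diff_distrib distrib_right)
  qed
  also have "\<dots> = (real M - 1) * (\<Sum>z'\<in>S. v z') - (\<Sum>z'\<in>S. ?B z' * v z')
      + (\<Sum>z'\<in>S. (if z = z' then P else 0) * v z')"
    by (simp only: sum.distrib sum_subtractf sum_distrib_left)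
  also have "(\<Sum>z'\<in>S. ?B z' * v z') = (\<Sum>i\<in>{1..M}. \<Sum>z'\<in>S. (if z i = z' i then real (n i) else 0) * v z')"
    unfolding sum_distrib_right by (rule sum.swap)
  finally show ?thesis
    by (simp only: fibre diagonal)
qed

lemma Cmat_quadratic_form_le:
  assumes "M \<ge> 2" and "\<forall>j\<in>{1..M}. n j \<ge> 2"
  defines "S \<equiv> strata M n" and "P \<equiv> \<Prod>i\<in>{1..M}. real (n i)"
  shows "(\<Sum>z\<in>S. v z * (\<Sum>z'\<in>S. Cmat M n z z' * v z')) \<le> P / Qval M n * (\<Sum>z\<in>S. (v z)\<^sup>2)"
proof -
  define G where "G z i = (\<Sum>z'\<in>{z' \<in> S. z' i = z i}. v z')" for z :: "nat \<Rightarrow> nat" and i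
  define F where "F i = (\<Sum>z\<in>S. v z * G z i)" for i
  have Q: "Qval M n > 0"
    using Qval_ge_1[OF assms(1,2)] by simp
  have fibre: "(\<Sum>z\<in>S. v z)\<^sup>2 \<le> real (n i) * F i" if "i \<in> {1..M}" for i
  proof -
    have "(\<lambda>z. z i) ` S \<subseteq> {1..n i}"
      using that unfolding S_def strata_def by auto
    then show ?thesis
      using square_sum_le_card_mult_fibre_form[of S "{1..n i}" "\<lambda>z. z i" v]
      unfolding F_def G_def S_def by (simp add: finite_strata)
  qed
  have "Qval M n * (\<Sum>z\<in>S. v z * (\<Sum>z'\<in>S. Cmat M n z z' * v z'))
      = (\<Sum>z\<in>S. v z * (Qval M n * (\<Sum>z'\<in>S. Cmat M n z z' * v z')))"
    by (simp add: sum_distrib_left mult.left_commute)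
  also have "\<dots> = (\<Sum>z\<in>S. v z * ((real M - 1) * (\<Sum>z'\<in>S. v z')
                   - (\<Sum>i\<in>{1..M}. real (n i) * G z i) + P * v z))"
    unfolding S_def P_def G_def
    by (intro sum.cong refl) (simp add: Qval_mult_Cmat_apply Q[THEN less_imp_neq, symmetric])
  also have "\<dots> = (real M - 1) * (\<Sum>z\<in>S. v z)\<^sup>2 - (\<Sum>i\<in>{1..M}. real (n i) * F i)
                 + P * (\<Sum>z\<in>S. (v z)\<^sup>2)"
  proof -
    have "(\<Sum>z\<in>S. v z * (\<Sum>i\<in>{1..M}. real (n i) * G z i)) = (\<Sum>i\<in>{1..M}. real (n i) * F i)"
      unfolding F_def sum_distrib_left by (subst sum.swap) (simp add: mult.left_commute)
    then show ?thesis
      by (simp add: algebra_simps sum.distrib sum_subtractf power2_eq_square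
          sum_distrib_left[symmetric] sum_distrib_right[symmetric])
  qed
  also have "\<dots> \<le> (real M - 1) * (\<Sum>z\<in>S. v z)\<^sup>2 - (\<Sum>i\<in>{1..M}. (\<Sum>z\<in>S. v z)\<^sup>2)
                 + P * (\<Sum>z\<in>S. (v z)\<^sup>2)"
  proof -
    have "(\<Sum>i\<in>{1..M}. (\<Sum>z\<in>S. v z)\<^sup>2) \<le> (\<Sum>i\<in>{1..M}. real (n i) * F i)"
      by (rule sum_mono) (rule fibre)
    then show ?thesis
      by linarith
  qed
  also have "\<dots> \<le> P * (\<Sum>z\<in>S. (v z)\<^sup>2)"
    by (simp add: algebra_simps)
  finally show ?thesis
    using Q by (simp add: field_simps)
qed

definition sign12 :: "nat \<Rightarrow> real" where
  "sign12 a = (if a = 1 then 1 else if a = 2 then -1 else 0)"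

lemma sum_eq_0_if_involution_neg:
  fixes g :: "'a \<Rightarrow> real"
  assumes "\<And>x. x \<in> A \<Longrightarrow> s x \<in> A" and "\<And>x. x \<in> A \<Longrightarrow> s (s x) = x"
    and "\<And>x. x \<in> A \<Longrightarrow> g (s x) = - g x"
  shows "sum g A = 0"
proof -
  have "sum g A = sum (\<lambda>x. - g x) A"
    by (rule sum.reindex_bij_witness[of _ s s]) (use assms in auto)
  then show ?thesis
    by (simp add: sum_negf)
qed

lemma sum_sign12_eq_0:
  fixes T :: "(nat \<Rightarrow> nat) set"
  assumes "k \<in> {1, 2}" and "\<And>z. z \<in> T \<Longrightarrow> z(k := transpose 1 2 (z k)) \<in> T"
  shows "(\<Sum>z\<in>T. sign12 (z 1) * sign12 (z 2)) = 0"
proof (rule sum_eq_0_if_involution_neg[where s = "\<lambda>z. z(k := transpose 1 2 (z k))"])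
  fix z :: "nat \<Rightarrow> nat"
  show "(z(k := transpose 1 2 (z k)))(k := transpose 1 2 ((z(k := transpose 1 2 (z k))) k)) = z"
    by simp
  from assms(1) show "sign12 ((z(k := transpose 1 2 (z k))) 1) * sign12 ((z(k := transpose 1 2 (z k))) 2)
      = - (sign12 (z 1) * sign12 (z 2))"
    by (auto simp: sign12_def transpose_def)
qed (use assms(2) in blast)

lemma transpose_12_in_strata:
  assumes z: "z \<in> strata M n" and k: "k \<in> {1..M}" and "n k \<ge> 2"
  shows "z(k := transpose 1 2 (z k)) \<in> strata M n"
proof -
  have "z k \<in> {1..n k}"
    using z k unfolding strata_def by blast
  then have "transpose 1 2 (z k) \<in> {1..n k}"
    using assms(3) by (auto simp: transpose_def)
  from PiE_fun_upd[OF this z[unfolded strata_def]] show ?thesis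
    using k by (simp add: strata_def insert_absorb)
qed

lemma Cmat_has_eigenvalue:
  assumes "M \<ge> 2" and "\<forall>j\<in>{1..M}. n j \<ge> 2"
  shows "is_eigenvalue (strata M n) (Cmat M n) ((\<Prod>i\<in>{1..M}. real (n i)) / Qval M n)"
proof -
  let ?S = "strata M n"
  let ?P = "\<Prod>i\<in>{1..M}. real (n i)"
  let ?v = "\<lambda>z. sign12 (z 1) * sign12 (z 2)"
  have Q: "Qval M n \<noteq> 0"
    using Qval_ge_1[OF assms] by simp
  have flip: "z(k := transpose 1 2 (z k)) \<in> ?S" if "z \<in> ?S" and "k \<in> {1, 2}" for z k
    using that assms by (intro transpose_12_in_strata) auto
  have total: "(\<Sum>z'\<in>?S. ?v z') = 0"
    by (rule sum_sign12_eq_0[of 1]) (simp, blast intro: flip)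
  have fibre: "(\<Sum>z'\<in>{z' \<in> ?S. z' i = z i}. ?v z') = 0" for z i
  proof -
    define k :: nat where "k = (if i = 1 then 2 else 1)"
    have k: "k \<in> {1, 2}" "k \<noteq> i"
      by (simp_all add: k_def)
    show ?thesis
    proof (rule sum_sign12_eq_0[OF k(1)])
      fix z' assume z': "z' \<in> {z' \<in> ?S. z' i = z i}"
      have "z'(k := transpose 1 2 (z' k)) \<in> ?S"
        using z' k(1) flip by blast
      moreover have "(z'(k := transpose 1 2 (z' k))) i = z' i"
        using k(2) by simp
      ultimately show "z'(k := transpose 1 2 (z' k)) \<in> {z' \<in> ?S. z' i = z i}"
        using z' by simp
    qed
  qed
  show ?thesis
    unfolding is_eigenvalue_def
  proof (intro exI[of _ ?v] conjI ballI)
    have "(\<lambda>j\<in>{1..M}. 1) \<in> ?S" and "?v (\<lambda>j\<in>{1..M}. 1) = 1"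
      using assms by (auto simp: strata_def sign12_def)
    then show "\<exists>z\<in>?S. ?v z \<noteq> 0"
      by (intro bexI[of _ "\<lambda>j\<in>{1..M}. 1"]) simp_all
  next
    fix z assume z: "z \<in> ?S"
    have zero: "(\<Sum>i\<in>{1..M}. real (n i) * (\<Sum>z'\<in>{z' \<in> ?S. z' i = z i}. ?v z')) = 0"
      by (intro sum.neutral ballI) (simp only: fibre mult_zero_right)
    have "Qval M n * (\<Sum>z'\<in>?S. Cmat M n z z' * ?v z') = (real M - 1) * 0 - 0 + ?P * ?v z"
      using Qval_mult_Cmat_apply[OF Q z, of ?v] unfolding total zero .
    then show "(\<Sum>z'\<in>?S. Cmat M n z z' * ?v z') = ?P / Qval M n * ?v z"
      using Q by (simp add: eq_divide_eq mult.commute)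
  qed
qed

theorem lemma1:
  fixes M :: nat and n :: "nat \<Rightarrow> nat"
  assumes "M \<ge> 2" and "\<forall>j\<in>{1..M}. n j \<ge> 2"
  shows "(\<forall>J. J \<subseteq> {1..M} \<longrightarrow> card J < M - 1 \<longrightarrow>
            lam M n J = (\<Prod>i\<in>{1..M}. real (n i)) / Qval M n)
       \<and> (\<forall>J. J \<subseteq> {1..M} \<longrightarrow> card J \<ge> M - 1 \<longrightarrow> lam M n J = 0)
       \<and> is_max_eigenvalue (strata M n) (Cmat M n)
           ((\<Prod>i\<in>{1..M}. real (n i)) /
            ((\<Prod>i\<in>{1..M}. real (n i)) - (\<Sum>i\<in>{1..M}. real (n i)) + real M - 1))"
  unfolding Qval_def[symmetric] is_max_eigenvalue_def
proof (intro conjI allI impI)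
  fix J assume "J \<subseteq> {1..M}" and "card J < M - 1"
  then show "lam M n J = (\<Prod>i\<in>{1..M}. real (n i)) / Qval M n"
    by (rule lam_eq_of_card_less[OF assms])
next
  fix J assume "J \<subseteq> {1..M}" and "card J \<ge> M - 1"
  then show "lam M n J = 0"
    by (rule lam_eq_0_of_card_ge[OF assms])
next
  show "is_eigenvalue (strata M n) (Cmat M n) ((\<Prod>i\<in>{1..M}. real (n i)) / Qval M n)"
    by (rule Cmat_has_eigenvalue[OF assms])
next
  fix \<nu> assume "is_eigenvalue (strata M n) (Cmat M n) \<nu>"
  then show "\<nu> \<le> (\<Prod>i\<in>{1..M}. real (n i)) / Qval M n"
    by (rule eigenvalue_le_of_quadratic_form_le[OF finite_strata _ Cmat_quadratic_form_le[OF assms]])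
qed

end
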